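(* Let $\ell:\mathcal{H}\times\mathcal{Z}\times\mathcal{Z}\to[0,B]$ be a $B$-bounded pairwise loss with $\mathcal{R}_s(\ell\circ\mathcal{H})=C_d\cdot O(\sqrt{1/s})$, let $z_1,\dots,z_n$ be a stream, and suppose an online learning algorithm incurs buffer penalties based on a buffer of size $s$ updated with the RS-x algorithm (described below) and generates an ensemble $h_1,\dots,h_{n-1}$. Then with probability at least $1-\delta$ over the random variables used to update the buffer, \[ \mathfrak{R}_n\le\mathfrak{R}^{\mathrm{buf}}_n+C_d\,(n-1)\cdot O\!\left(\sqrt{\frac{\log\frac n\delta}{s}}\right), \] where $\mathfrak{R}_n=\sum_{t=2}^n\hat{\mathcal{L}}_t(h_{t-1})-\inf_{h\in\mathcal{H}}\sum_{t=2}^n\hat{\mathcal{L}}_t(h)$ and $\mathfrak{R}^{\mathrm{buf}}_n=\sum_{t=2}^n\hat{\mathcal{L}}^{\mathrm{buf}}_t(h_{t-1})-\inf_{h\in\mathcal{H}}\sum_{t=2}^n\hat{\mathcal{L}}^{\mathrm{buf}}_t(h)$.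
   Context: All-pairs penalty $\hat{\mathcal{L}}_t(h)=\frac1{t-1}\sum_{\tau=1}^{t-1}\ell(h,z_t,z_\tau)$; buffer penalty $\hat{\mathcal{L}}^{\mathrm{buf}}_t(h)=\frac1{|B_t|}\sum_{z\in B_t}\ell(h,z_t,z)$, with $B_t$ the buffer after processing $z_1,\dots,z_{t-1}$. RS-x update with the point $z_t$ at step $t$: if $|B|<s$, add $z_t$; else if $t=s+1$, replace $B$ by $s$ points sampled uniformly with replacement from $B\cup\{z_t\}$; else independently replace each buffer entry by $z_t$ with probability $1/t$. $\mathcal{R}_s(\ell\circ\mathcal{H})=\mathbb{E}[\sup_h\frac1s\sum_{j=1}^s\epsilon_j\ell(h,z,z_j)]$; $C_d$ is its dependence on the input dimension $d$; $O(\cdot)$ hides constants such as $B$. The infimum over $\mathcal{H}$ of $\sum_t\hat{\mathcal{L}}_t$ is assumed attained. *)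

theory Defs
  imports "HOL-Probability.Probability"
begin

definition rademacher :: "('h \<Rightarrow> 'z \<Rightarrow> 'z \<Rightarrow> real) \<Rightarrow> 'h set \<Rightarrow> 'z pmf \<Rightarrow> 'z \<Rightarrow> nat \<Rightarrow> real" where
  "rademacher l H D z s =
     measure_pmf.expectation
       (pair_pmf (Pi_pmf {..<s} undefined (\<lambda>_. D))
                 (Pi_pmf {..<s} 0 (\<lambda>_. pmf_of_set {-1, 1::real})))
       (\<lambda>(w, eps). SUP h\<in>H. (1 / real s) * (\<Sum>j<s. eps j * l h z (w j)))"

definition rsx_step :: "nat \<Rightarrow> nat \<Rightarrow> 'z \<Rightarrow> 'z list \<Rightarrow> 'z list pmf" where
  "rsx_step s t zt Bf =
     (if length Bf < s then return_pmf (Bf @ [zt])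
      else if t = s + 1 then
        map_pmf (\<lambda>f. map f [0..<s])
          (Pi_pmf {..<s} undefined (\<lambda>_. map_pmf (\<lambda>i. (Bf @ [zt]) ! i) (pmf_of_set {..<s+1})))
      else
        map_pmf (\<lambda>f. map f [0..<length Bf])
          (Pi_pmf {..<length Bf} undefined
             (\<lambda>i. map_pmf (\<lambda>b. if b then zt else Bf ! i) (bernoulli_pmf (1 / real t)))))"

text \<open>Joint law of the buffers: rsx_traj s z m is a distribution over functions Bs with
  Bs t = B_t (the buffer after processing z 1, ..., z (t-1)) for 1 \<le> t \<le> m.\<close>
primrec rsx_traj :: "nat \<Rightarrow> (nat \<Rightarrow> 'z) \<Rightarrow> nat \<Rightarrow> (nat \<Rightarrow> 'z list) pmf" where
  "rsx_traj s z 0 = return_pmf (\<lambda>_. [])"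
| "rsx_traj s z (Suc k) =
     (if k = 0 then return_pmf (\<lambda>_. [])
      else bind_pmf (rsx_traj s z k)
             (\<lambda>Bs. map_pmf (\<lambda>B'. Bs(Suc k := B')) (rsx_step s k (z k) (Bs k))))"

definition pen_all :: "('h \<Rightarrow> 'z \<Rightarrow> 'z \<Rightarrow> real) \<Rightarrow> (nat \<Rightarrow> 'z) \<Rightarrow> nat \<Rightarrow> 'h \<Rightarrow> real" where
  "pen_all l z t h = (1 / real (t - 1)) * (\<Sum>\<tau>=1..t-1. l h (z t) (z \<tau>))"

definition pen_buf :: "('h \<Rightarrow> 'z \<Rightarrow> 'z \<Rightarrow> real) \<Rightarrow> (nat \<Rightarrow> 'z) \<Rightarrow> (nat \<Rightarrow> 'z list) \<Rightarrow> nat \<Rightarrow> 'h \<Rightarrow> real" where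
  "pen_buf l z Bs t h = (\<Sum>w\<leftarrow>Bs t. l h (z t) w) / real (length (Bs t))"

definition regret_all :: "('h \<Rightarrow> 'z \<Rightarrow> 'z \<Rightarrow> real) \<Rightarrow> 'h set \<Rightarrow> (nat \<Rightarrow> 'z) \<Rightarrow> nat \<Rightarrow> (nat \<Rightarrow> 'h) \<Rightarrow> real" where
  "regret_all l H z n hs =
     (\<Sum>t=2..n. pen_all l z t (hs (t - 1))) - (INF g\<in>H. \<Sum>t=2..n. pen_all l z t g)"

definition regret_buf :: "('h \<Rightarrow> 'z \<Rightarrow> 'z \<Rightarrow> real) \<Rightarrow> 'h set \<Rightarrow> (nat \<Rightarrow> 'z) \<Rightarrow> (nat \<Rightarrow> 'z list) \<Rightarrow> nat \<Rightarrow> (nat \<Rightarrow> 'h) \<Rightarrow> real" where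
  "regret_buf l H z Bs n hs =
     (\<Sum>t=2..n. pen_buf l z Bs t (hs (t - 1))) - (INF g\<in>H. \<Sum>t=2..n. pen_buf l z Bs t g)"

end

theory Submission
  imports Defs
begin

text \<open>
  Let g minimise the cumulative all-pairs penalty. The gap between the two regrets is at most the
  sum over t of the discrepancies sup_h ((L_t h - L_t g) - (L^buf_t h - L^buf_t g)). Under RS-x
  the buffer B_t is either the whole prefix z_1, ..., z_(t-1), where the discrepancy vanishes, or
  a sample of s independent uniform draws from that prefix: replacing a uniform draw from the
  first t - 2 points by z_(t-1) with probability 1/(t-1) gives a uniform draw from the first
  t - 1 points. For such a sample the discrepancy has mean at most twice the Rademacher
  complexity (symmetrization) and bounded differences of order C_d / s, so McDiarmid's
  inequality and a union bound over t give the claim. The bounded differences, and the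
  degenerate case C_d = 0, come from the Rademacher complexity of a single point, which is half
  the oscillation of the loss over the hypothesis class.
\<close>

lemma expectation_bind_pmf_finite:
  fixes h :: "'b \<Rightarrow> real"
  assumes "finite (set_pmf p)" "\<And>x. x \<in> set_pmf p \<Longrightarrow> finite (set_pmf (f x))"
  shows "measure_pmf.expectation (bind_pmf p f) h =
         measure_pmf.expectation p (\<lambda>x. measure_pmf.expectation (f x) h)"
proof -
  have "measure_pmf.expectation (bind_pmf p f) h =
        (\<Sum>a\<in>set_pmf p. pmf p a *\<^sub>R measure_pmf.expectation (f a) h)"
    using assms by (intro pmf_expectation_bind) auto
  also have "\<dots> = measure_pmf.expectation p (\<lambda>x. measure_pmf.expectation (f x) h)"
    using assms by (subst integral_measure_pmf[where A="set_pmf p"]) auto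
  finally show ?thesis .
qed

lemma expectation_pair_pmf_finite:
  fixes g :: "'a \<times> 'b \<Rightarrow> real"
  assumes "finite (set_pmf p)" "finite (set_pmf q)"
  shows "measure_pmf.expectation (pair_pmf p q) g =
         measure_pmf.expectation p (\<lambda>a. measure_pmf.expectation q (\<lambda>b. g (a, b)))"
  unfolding pair_pmf_def using assms
  by (subst expectation_bind_pmf_finite)
    (auto intro!: Bochner_Integration.integral_cong simp: expectation_bind_pmf_finite)

lemma expectation_pmf_swap_finite:
  fixes g :: "'a \<Rightarrow> 'b \<Rightarrow> real"
  assumes "finite (set_pmf p)" "finite (set_pmf q)"
  shows "measure_pmf.expectation p (\<lambda>a. measure_pmf.expectation q (\<lambda>b. g a b)) =
         measure_pmf.expectation q (\<lambda>b. measure_pmf.expectation p (\<lambda>a. g a b))"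
proof -
  have "measure_pmf.expectation p (\<lambda>a. measure_pmf.expectation q (\<lambda>b. g a b)) =
        measure_pmf.expectation (pair_pmf p q) (\<lambda>(a, b). g a b)"
    using assms by (simp add: expectation_pair_pmf_finite)
  also have "\<dots> = measure_pmf.expectation (pair_pmf q p) (\<lambda>(b, a). g a b)"
    by (subst pair_commute_pmf) (simp add: case_prod_unfold)
  also have "\<dots> = measure_pmf.expectation q (\<lambda>b. measure_pmf.expectation p (\<lambda>a. g a b))"
    using assms by (simp add: expectation_pair_pmf_finite)
  finally show ?thesis .
qed

lemma finite_set_pmf_Pi_pmf:
  assumes "finite A" "\<And>i. i \<in> A \<Longrightarrow> finite (set_pmf (p i))"
  shows "finite (set_pmf (Pi_pmf A d p))"
  using assms by (simp add: set_Pi_pmf o_def finite_PiE_dflt)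

lemma expectation_Pi_pmf_component:
  fixes g :: "'a \<Rightarrow> real"
  assumes "finite A" "j \<in> A"
  shows "measure_pmf.expectation (Pi_pmf A d p) (\<lambda>X. g (X j)) = measure_pmf.expectation (p j) g"
proof -
  have "measure_pmf.expectation (Pi_pmf A d p) (\<lambda>X. g (X j)) =
        measure_pmf.expectation (map_pmf (\<lambda>X. X j) (Pi_pmf A d p)) g" by simp
  also have "map_pmf (\<lambda>X. X j) (Pi_pmf A d p) = p j"
    using assms by (simp add: Pi_pmf_component)
  finally show ?thesis .
qed

lemma prob_all_ge_union_bound:
  assumes "finite I" "\<And>i. i \<in> I \<Longrightarrow> measure_pmf.prob p {x. \<not> P i x} \<le> q"
  shows "measure_pmf.prob p {x. \<forall>i\<in>I. P i x} \<ge> 1 - real (card I) * q"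
proof -
  have "measure_pmf.prob p (UNIV - {x. \<forall>i\<in>I. P i x}) =
        measure_pmf.prob p (\<Union>i\<in>I. {x. \<not> P i x})"
    by (intro arg_cong[where f="measure_pmf.prob p"]) auto
  also have "\<dots> \<le> (\<Sum>i\<in>I. measure_pmf.prob p {x. \<not> P i x})"
    using assms(1) by (intro measure_pmf.finite_measure_subadditive_finite) auto
  also have "\<dots> \<le> real (card I) * q"
    using sum_mono[of I _ "\<lambda>_. q", OF assms(2)] by simp
  finally show ?thesis
    using measure_pmf.prob_compl[of "{x. \<forall>i\<in>I. P i x}" p] by simp
qed

subsection \<open>McDiarmid's inequality for finite product distributions\<close>

lemma hoeffdings_lemma_pmf:
  fixes G :: "'a \<Rightarrow> real"
  assumes "finite (set_pmf q)" "l > 0" "\<And>y. G y \<in> {a..b}"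
  shows "measure_pmf.expectation q (\<lambda>y. exp (l * (G y - measure_pmf.expectation q G)))
         \<le> exp (l\<^sup>2 * (b - a)\<^sup>2 / 8)"
proof -
  interpret interval_bounded_random_variable "measure_pmf q" G a b
    by unfold_locales (use assms in auto)
  have "ennreal (measure_pmf.expectation q (\<lambda>y. exp (l * (G y - measure_pmf.expectation q G))))
        = nn_integral q (\<lambda>y. exp (l * (G y - measure_pmf.expectation q G)))"
    using assms by (intro nn_integral_eq_integral[symmetric] integrable_measure_pmf_finite) auto
  also have "\<dots> \<le> ennreal (exp (l\<^sup>2 * (b - a)\<^sup>2 / 8))"
    using Hoeffdings_lemma_nn_integral[OF assms(2)] by simp
  finally show ?thesis by (simp add: ennreal_le_iff)
qed

lemma expectation_Pi_pmf_insert: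
  fixes F :: "('i \<Rightarrow> 'a) \<Rightarrow> real"
  assumes "finite A" "x \<notin> A" "\<And>i. i \<in> insert x A \<Longrightarrow> finite (set_pmf (p i))"
  shows "measure_pmf.expectation (Pi_pmf (insert x A) d p) F =
         measure_pmf.expectation (p x) (\<lambda>y. measure_pmf.expectation (Pi_pmf A d p) (\<lambda>f. F (f(x := y))))"
proof -
  have "Pi_pmf (insert x A) d p = bind_pmf (p x) (\<lambda>y. map_pmf (\<lambda>f. f(x := y)) (Pi_pmf A d p))"
    using assms by (simp add: Pi_pmf_insert' map_pmf_def)
  moreover have "finite (set_pmf (Pi_pmf A d p))"
    using assms by (intro finite_set_pmf_Pi_pmf) auto
  ultimately show ?thesis
    using assms(3) by (simp add: expectation_bind_pmf_finite)
qed

lemma abs_expectation_diff_le: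
  fixes u v :: "'a \<Rightarrow> real"
  assumes "finite (set_pmf p)" "\<And>x. \<bar>u x - v x\<bar> \<le> c"
  shows "\<bar>measure_pmf.expectation p u - measure_pmf.expectation p v\<bar> \<le> c"
proof -
  have "\<bar>measure_pmf.expectation p u - measure_pmf.expectation p v\<bar> =
        \<bar>measure_pmf.expectation p (\<lambda>x. u x - v x)\<bar>"
    using assms(1) by (subst Bochner_Integration.integral_diff)
      (auto intro: integrable_measure_pmf_finite)
  also have "\<dots> \<le> measure_pmf.expectation p (\<lambda>x. \<bar>u x - v x\<bar>)"
    by (rule integral_abs_bound)
  also have "\<dots> \<le> measure_pmf.expectation p (\<lambda>_. c)"
    using assms by (intro integral_mono integrable_measure_pmf_finite) auto
  finally show ?thesis by simp
qed

text \<open>Induction on the index set: conditioning on one coordinate leaves a function whose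
  conditional mean oscillates by at most \<open>c\<close>, so Hoeffding's lemma applies to it.\<close>

lemma mcdiarmid_exp_moment:
  fixes F :: "('i \<Rightarrow> 'a) \<Rightarrow> real"
  assumes "finite A" "\<And>i. i \<in> A \<Longrightarrow> finite (set_pmf (p i))" "l > 0"
    "\<And>i f g. i \<in> A \<Longrightarrow> (\<And>j. j \<noteq> i \<Longrightarrow> f j = g j) \<Longrightarrow> \<bar>F f - F g\<bar> \<le> c"
  shows "measure_pmf.expectation (Pi_pmf A d p)
           (\<lambda>f. exp (l * (F f - measure_pmf.expectation (Pi_pmf A d p) F)))
         \<le> exp (l\<^sup>2 * real (card A) * c\<^sup>2 / 2)"
  using assms(1,2,4)
proof (induction A arbitrary: F rule: finite_induct)
  case empty
  then show ?case by simp
next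
  case (insert x A)
  define P where "P = Pi_pmf A d p"
  define G where "G y = measure_pmf.expectation P (\<lambda>f. F (f(x := y)))" for y
  define EG where "EG = measure_pmf.expectation (p x) G"
  have fin_P: "finite (set_pmf P)"
    unfolding P_def using insert by (intro finite_set_pmf_Pi_pmf) auto
  have fin_x: "finite (set_pmf (p x))" using insert by auto
  have expand: "measure_pmf.expectation (Pi_pmf (insert x A) d p) F' =
      measure_pmf.expectation (p x) (\<lambda>y. measure_pmf.expectation P (\<lambda>f. F' (f(x := y))))"
    for F' :: "('i \<Rightarrow> 'a) \<Rightarrow> real"
    unfolding P_def using insert by (intro expectation_Pi_pmf_insert) auto
  have G_range: "G y \<in> {G undefined - c..G undefined + c}" for y
    using abs_expectation_diff_le[OF fin_P, of "\<lambda>f. F (f(x := y))" "\<lambda>f. F (f(x := undefined))" c]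
      insert.prems(2)[of x] by (auto simp: G_def abs_le_iff)
  have IH: "measure_pmf.expectation P (\<lambda>f. exp (l * (F (f(x := y)) - G y)))
            \<le> exp (l\<^sup>2 * real (card A) * c\<^sup>2 / 2)" for y
    unfolding G_def P_def
  proof (rule insert.IH)
    show "\<And>i. i \<in> A \<Longrightarrow> finite (set_pmf (p i))" using insert.prems by auto
    fix i and f g :: "'i \<Rightarrow> 'a" assume "i \<in> A" "\<And>j. j \<noteq> i \<Longrightarrow> f j = g j"
    then show "\<bar>F (f(x := y)) - F (g(x := y))\<bar> \<le> c" by (intro insert.prems(2)[of i]) auto
  qed
  have "measure_pmf.expectation (Pi_pmf (insert x A) d p)
           (\<lambda>f. exp (l * (F f - measure_pmf.expectation (Pi_pmf (insert x A) d p) F)))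
      = measure_pmf.expectation (p x)
          (\<lambda>y. exp (l * (G y - EG)) * measure_pmf.expectation P (\<lambda>f. exp (l * (F (f(x := y)) - G y))))"
    unfolding expand[of F] G_def[symmetric] EG_def[symmetric] expand
    by (simp add: mult_exp_exp algebra_simps flip: integral_mult_right_zero)
  also have "\<dots> \<le> measure_pmf.expectation (p x)
           (\<lambda>y. exp (l * (G y - EG)) * exp (l\<^sup>2 * real (card A) * c\<^sup>2 / 2))"
    using fin_x by (intro integral_mono integrable_measure_pmf_finite mult_left_mono IH) auto
  also have "\<dots> = measure_pmf.expectation (p x) (\<lambda>y. exp (l * (G y - EG))) *
           exp (l\<^sup>2 * real (card A) * c\<^sup>2 / 2)"
    by simp
  also have "\<dots> \<le> exp (l\<^sup>2 * (2 * c)\<^sup>2 / 8) * exp (l\<^sup>2 * real (card A) * c\<^sup>2 / 2)"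
    using hoeffdings_lemma_pmf[OF fin_x \<open>l > 0\<close> G_range] unfolding EG_def
    by (intro mult_right_mono) auto
  also have "\<dots> = exp (l\<^sup>2 * real (card (insert x A)) * c\<^sup>2 / 2)"
    using insert by (simp add: mult_exp_exp power2_eq_square algebra_simps add_divide_distrib)
  finally show ?case .
qed

lemma mcdiarmid_inequality:
  fixes F :: "('i \<Rightarrow> 'a) \<Rightarrow> real"
  assumes "finite A" "A \<noteq> {}" "\<And>i. i \<in> A \<Longrightarrow> finite (set_pmf (p i))" "c > 0" "u > 0"
    "\<And>i f g. i \<in> A \<Longrightarrow> (\<And>j. j \<noteq> i \<Longrightarrow> f j = g j) \<Longrightarrow> \<bar>F f - F g\<bar> \<le> c"
  shows "measure_pmf.prob (Pi_pmf A d p) {f. F f - measure_pmf.expectation (Pi_pmf A d p) F \<ge> u}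
         \<le> exp (- (u\<^sup>2) / (2 * real (card A) * c\<^sup>2))"
proof -
  define P where "P = Pi_pmf A d p"
  define EF where "EF = measure_pmf.expectation P F"
  define n where "n = real (card A)"
  define l where "l = u / (n * c\<^sup>2)"
  have n: "n > 0" using assms(1,2) by (simp add: n_def card_gt_0_iff)
  have l: "l > 0" using n assms by (simp add: l_def)
  have fin_P: "finite (set_pmf P)"
    unfolding P_def using assms by (intro finite_set_pmf_Pi_pmf) auto
  have markov: "indicator {f. F f - EF \<ge> u} f \<le> exp (l * (F f - EF)) * exp (- (l * u))" for f
  proof (cases "F f - EF \<ge> u")
    case True
    then have "l * u \<le> l * (F f - EF)" using l by (intro mult_left_mono) auto
    then show ?thesis using True by (simp add: mult_exp_exp)
  qed simp
  have "measure_pmf.prob P {f. F f - EF \<ge> u} = measure_pmf.expectation P (indicator {f. F f - EF \<ge> u})"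
    by simp
  also have "\<dots> \<le> measure_pmf.expectation P (\<lambda>f. exp (l * (F f - EF)) * exp (- (l * u)))"
    by (intro integral_mono integrable_measure_pmf_finite fin_P markov)
  also have "\<dots> = measure_pmf.expectation P (\<lambda>f. exp (l * (F f - EF))) * exp (- (l * u))"
    by simp
  also have "\<dots> \<le> exp (l\<^sup>2 * n * c\<^sup>2 / 2) * exp (- (l * u))"
    unfolding P_def EF_def n_def
    by (intro mult_right_mono mcdiarmid_exp_moment assms l) auto
  also have "\<dots> = exp (- (u\<^sup>2) / (2 * n * c\<^sup>2))"
    using n assms by (simp add: mult_exp_exp l_def power2_eq_square field_simps)
  finally show ?thesis unfolding P_def EF_def n_def .
qed

subsection \<open>Symmetrization\<close>

abbreviation rademacher_signs :: "nat \<Rightarrow> (nat \<Rightarrow> real) pmf" where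
  "rademacher_signs s \<equiv> Pi_pmf {..<s} 0 (\<lambda>_. pmf_of_set {-1, 1})"

definition sample_mean :: "('z \<Rightarrow> real) \<Rightarrow> nat \<Rightarrow> (nat \<Rightarrow> 'z) \<Rightarrow> real" where
  "sample_mean f s X = (\<Sum>j<s. f (X j)) / real s"

definition rademacher_sup :: "('h \<Rightarrow> 'z \<Rightarrow> real) \<Rightarrow> 'h set \<Rightarrow> nat \<Rightarrow> (nat \<Rightarrow> 'z) \<Rightarrow> (nat \<Rightarrow> real) \<Rightarrow> real"
  where "rademacher_sup f H s w e = (SUP h\<in>H. (1 / real s) * (\<Sum>j<s. e j * f h (w j)))"

lemma rademacher_eq_expectation_rademacher_sup:
  "rademacher l H D z s =
   measure_pmf.expectation (pair_pmf (Pi_pmf {..<s} undefined (\<lambda>_. D)) (rademacher_signs s))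
     (\<lambda>(w, e). rademacher_sup (\<lambda>h. l h z) H s w e)"
  by (simp add: rademacher_def rademacher_sup_def)

lemma finite_set_pmf_rademacher_signs: "finite (set_pmf (rademacher_signs s))"
  by (intro finite_set_pmf_Pi_pmf) auto

lemma rademacher_signs_values:
  "e \<in> set_pmf (rademacher_signs s) \<Longrightarrow> j < s \<Longrightarrow> e j = -1 \<or> e j = 1"
  by (auto simp: set_Pi_pmf PiE_dflt_def)

lemma map_uminus_rademacher_signs:
  "map_pmf (\<lambda>e j. - e j) (rademacher_signs s) = rademacher_signs s"
proof -
  have "map_pmf uminus (pmf_of_set {-1, 1::real}) = pmf_of_set {-1, 1}"
    by (subst map_pmf_of_set_inj) (auto simp: inj_on_def insert_commute)
  moreover have "Pi_pmf {..<s} (-0::real) (\<lambda>_. map_pmf uminus (pmf_of_set {-1, 1::real})) =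
        map_pmf (\<lambda>h. uminus \<circ> h) (rademacher_signs s)"
    by (rule Pi_pmf_map) auto
  ultimately show ?thesis by (simp add: o_def)
qed

lemma expectation_rademacher_sup_uminus:
  "measure_pmf.expectation (rademacher_signs s) (\<lambda>e. rademacher_sup f H s w (\<lambda>j. - e j)) =
   measure_pmf.expectation (rademacher_signs s) (rademacher_sup f H s w)"
proof -
  have "measure_pmf.expectation (rademacher_signs s) (\<lambda>e. rademacher_sup f H s w (\<lambda>j. - e j)) =
        measure_pmf.expectation (map_pmf (\<lambda>e j. - e j) (rademacher_signs s)) (rademacher_sup f H s w)"
    by simp
  then show ?thesis by (simp only: map_uminus_rademacher_signs)
qed

definition sign_swap :: "(nat \<Rightarrow> real) \<Rightarrow> (nat \<Rightarrow> 'z) \<times> (nat \<Rightarrow> 'z) \<Rightarrow> (nat \<Rightarrow> 'z) \<times> (nat \<Rightarrow> 'z)"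
  where "sign_swap e p =
    ((\<lambda>j. if e j = 1 then fst p j else snd p j), (\<lambda>j. if e j = 1 then snd p j else fst p j))"

lemma sign_swap_sign_swap [simp]: "sign_swap e (sign_swap e p) = p"
  by (cases p) (auto simp: sign_swap_def fun_eq_iff)

lemma map_sign_swap_pair_Pi_pmf:
  assumes "finite A"
  shows "map_pmf (sign_swap e) (pair_pmf (Pi_pmf A d (\<lambda>_. D)) (Pi_pmf A d (\<lambda>_. D)))
         = pair_pmf (Pi_pmf A d (\<lambda>_. D)) (Pi_pmf A d (\<lambda>_. D))"
proof (rule pmf_eqI)
  fix p :: "(nat \<Rightarrow> 'a) \<times> (nat \<Rightarrow> 'a)"
  obtain a b where p: "p = (a, b)" by (cases p)
  define a' where "a' = (\<lambda>j. if e j = 1 then a j else b j)"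
  define b' where "b' = (\<lambda>j. if e j = 1 then b j else a j)"
  have swap: "sign_swap e p = (a', b')" unfolding p sign_swap_def a'_def b'_def by auto
  have prods: "(\<Prod>x\<in>A. pmf D (a' x)) * (\<Prod>x\<in>A. pmf D (b' x)) =
                 (\<Prod>x\<in>A. pmf D (a x)) * (\<Prod>x\<in>A. pmf D (b x))"
    by (simp add: prod.distrib[symmetric] a'_def b'_def) (intro prod.cong; simp add: mult.commute)
  have supports: "((\<forall>x. x \<notin> A \<longrightarrow> a' x = d) \<and> (\<forall>x. x \<notin> A \<longrightarrow> b' x = d)) =
                 ((\<forall>x. x \<notin> A \<longrightarrow> a x = d) \<and> (\<forall>x. x \<notin> A \<longrightarrow> b x = d))"
    by (auto simp: a'_def b'_def)
  have "inj (sign_swap e)" by (metis injI sign_swap_sign_swap)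
  then have "pmf (map_pmf (sign_swap e) (pair_pmf (Pi_pmf A d (\<lambda>_. D)) (Pi_pmf A d (\<lambda>_. D)))) p
      = pmf (pair_pmf (Pi_pmf A d (\<lambda>_. D)) (Pi_pmf A d (\<lambda>_. D))) (sign_swap e p)"
    by (metis pmf_map_inj' sign_swap_sign_swap)
  also have "\<dots> = pmf (pair_pmf (Pi_pmf A d (\<lambda>_. D)) (Pi_pmf A d (\<lambda>_. D))) p"
    unfolding swap unfolding p pmf_pair using assms prods supports
    by (subst (1 2 3 4) pmf_Pi) auto
  finally show "pmf (map_pmf (sign_swap e) (pair_pmf (Pi_pmf A d (\<lambda>_. D)) (Pi_pmf A d (\<lambda>_. D)))) p
      = pmf (pair_pmf (Pi_pmf A d (\<lambda>_. D)) (Pi_pmf A d (\<lambda>_. D))) p" .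
qed

lemma sample_mean_sign_swap_gap:
  assumes "\<And>j. j < s \<Longrightarrow> e j = -1 \<or> e j = 1"
  shows "sample_mean f s (snd (sign_swap e p)) - sample_mean f s (fst (sign_swap e p)) =
         (1 / real s) * (\<Sum>j<s. e j * (f (snd p j) - f (fst p j)))"
proof -
  have "(\<Sum>j<s. f (snd (sign_swap e p) j) - f (fst (sign_swap e p) j)) =
        (\<Sum>j<s. e j * (f (snd p j) - f (fst p j)))"
    using assms by (intro sum.cong refl) (force simp: sign_swap_def)
  then show ?thesis
    unfolding sample_mean_def diff_divide_distrib[symmetric] sum_subtractf[symmetric] by simp
qed

context
  fixes f :: "'h \<Rightarrow> 'z \<Rightarrow> real" and H :: "'h set" and D :: "'z pmf" and s :: nat
    and B :: real and d :: 'z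
  assumes H: "H \<noteq> {}" and fin_D: "finite (set_pmf D)" and s: "s \<ge> 1"
    and bounded: "\<And>h w. h \<in> H \<Longrightarrow> \<bar>f h w\<bar> \<le> B"
begin

lemma finite_set_pmf_sample: "finite (set_pmf (Pi_pmf {..<s} d (\<lambda>_. D)))"
  using fin_D by (intro finite_set_pmf_Pi_pmf) auto

lemma abs_signed_mean_le:
  assumes "h \<in> H"
  shows "\<bar>(1 / real s) * (\<Sum>j<s. e j * f h (w j))\<bar> \<le> (1 / real s) * (\<Sum>j<s. \<bar>e j\<bar> * B)"
proof -
  have "\<bar>\<Sum>j<s. e j * f h (w j)\<bar> \<le> (\<Sum>j<s. \<bar>e j * f h (w j)\<bar>)" by (rule sum_abs)
  also have "\<dots> \<le> (\<Sum>j<s. \<bar>e j\<bar> * B)"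
    by (intro sum_mono) (simp add: abs_mult bounded assms mult_left_mono)
  finally show ?thesis by (simp add: abs_mult divide_right_mono)
qed

lemma bdd_above_signed_mean: "bdd_above ((\<lambda>h. (1 / real s) * (\<Sum>j<s. e j * f h (w j))) ` H)"
  by (rule bdd_aboveI2[where M="(1 / real s) * (\<Sum>j<s. \<bar>e j\<bar> * B)"])
    (use abs_le_D1[OF abs_signed_mean_le] in auto)

lemma abs_sample_mean_le: "h \<in> H \<Longrightarrow> \<bar>sample_mean (f h) s X\<bar> \<le> B"
  using abs_signed_mean_le[of h "\<lambda>_. 1" X] s by (simp add: sample_mean_def)

lemma bdd_above_sample_mean_gap:
  "bdd_above ((\<lambda>h. sample_mean (f h) s X' - sample_mean (f h) s X) ` H)"
proof (rule bdd_aboveI2[where M="2 * B"])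
  fix h assume "h \<in> H"
  then have "\<bar>sample_mean (f h) s X'\<bar> \<le> B" "\<bar>sample_mean (f h) s X\<bar> \<le> B"
    by (simp_all add: abs_sample_mean_le)
  then show "sample_mean (f h) s X' - sample_mean (f h) s X \<le> 2 * B" by linarith
qed

lemma expectation_sample_mean:
  "measure_pmf.expectation (Pi_pmf {..<s} d (\<lambda>_. D)) (sample_mean (f h) s) = measure_pmf.expectation D (f h)"
proof -
  have "measure_pmf.expectation (Pi_pmf {..<s} d (\<lambda>_. D)) (sample_mean (f h) s)
      = (\<Sum>j<s. measure_pmf.expectation (Pi_pmf {..<s} d (\<lambda>_. D)) (\<lambda>X. f h (X j))) / real s"
    unfolding sample_mean_def using finite_set_pmf_sample
    by (subst Bochner_Integration.integral_sum[symmetric]) (auto intro: integrable_measure_pmf_finite)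
  also have "\<dots> = (\<Sum>j<s. measure_pmf.expectation D (f h)) / real s"
    by (simp add: expectation_Pi_pmf_component)
  finally show ?thesis using s by simp
qed

text \<open>Ghost sample: replace the mean under \<open>D\<close> by the mean of an independent copy.\<close>

lemma expectation_sup_gap_le_ghost:
  "measure_pmf.expectation (Pi_pmf {..<s} d (\<lambda>_. D))
     (\<lambda>X. SUP h\<in>H. measure_pmf.expectation D (f h) - sample_mean (f h) s X)
   \<le> measure_pmf.expectation (pair_pmf (Pi_pmf {..<s} d (\<lambda>_. D)) (Pi_pmf {..<s} d (\<lambda>_. D)))
       (\<lambda>p. SUP h\<in>H. sample_mean (f h) s (snd p) - sample_mean (f h) s (fst p))"
proof -
  define P where "P = Pi_pmf {..<s} d (\<lambda>_. D)"
  have fin_P: "finite (set_pmf P)" using finite_set_pmf_sample by (simp add: P_def)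
  have pointwise: "(SUP h\<in>H. measure_pmf.expectation D (f h) - sample_mean (f h) s X)
       \<le> measure_pmf.expectation P (\<lambda>X'. SUP h\<in>H. sample_mean (f h) s X' - sample_mean (f h) s X)" for X
  proof (rule cSUP_least[OF H])
    fix h assume h: "h \<in> H"
    have "measure_pmf.expectation D (f h) - sample_mean (f h) s X =
          measure_pmf.expectation P (\<lambda>X'. sample_mean (f h) s X' - sample_mean (f h) s X)"
      using expectation_sample_mean[of h] fin_P unfolding P_def
      by (subst Bochner_Integration.integral_diff) (auto intro: integrable_measure_pmf_finite)
    also have "\<dots> \<le> measure_pmf.expectation P (\<lambda>X'. SUP h\<in>H. sample_mean (f h) s X' - sample_mean (f h) s X)"
      using fin_P by (intro integral_mono integrable_measure_pmf_finite cSUP_upper[OF h]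
          bdd_above_sample_mean_gap)
    finally show "measure_pmf.expectation D (f h) - sample_mean (f h) s X \<le> \<dots>" .
  qed
  have "measure_pmf.expectation P (\<lambda>X. SUP h\<in>H. measure_pmf.expectation D (f h) - sample_mean (f h) s X)
        \<le> measure_pmf.expectation P (\<lambda>X. measure_pmf.expectation P
             (\<lambda>X'. SUP h\<in>H. sample_mean (f h) s X' - sample_mean (f h) s X))"
    using fin_P by (intro integral_mono integrable_measure_pmf_finite pointwise)
  also have "\<dots> = measure_pmf.expectation (pair_pmf P P)
       (\<lambda>p. SUP h\<in>H. sample_mean (f h) s (snd p) - sample_mean (f h) s (fst p))"
    using fin_P by (simp add: expectation_pair_pmf_finite)
  finally show ?thesis unfolding P_def .
qed

lemma expectation_ghost_gap_sign_swap:
  assumes "e \<in> set_pmf (rademacher_signs s)"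
  shows "measure_pmf.expectation (pair_pmf (Pi_pmf {..<s} d (\<lambda>_. D)) (Pi_pmf {..<s} d (\<lambda>_. D)))
           (\<lambda>p. SUP h\<in>H. sample_mean (f h) s (snd p) - sample_mean (f h) s (fst p))
       = measure_pmf.expectation (pair_pmf (Pi_pmf {..<s} d (\<lambda>_. D)) (Pi_pmf {..<s} d (\<lambda>_. D)))
           (\<lambda>p. SUP h\<in>H. (1 / real s) * (\<Sum>j<s. e j * (f h (snd p j) - f h (fst p j))))"
    (is "measure_pmf.expectation ?PP ?gap = _")
proof -
  have "measure_pmf.expectation ?PP ?gap = measure_pmf.expectation (map_pmf (sign_swap e) ?PP) ?gap"
    by (simp only: map_sign_swap_pair_Pi_pmf finite_lessThan)
  also have "\<dots> = measure_pmf.expectation ?PP (\<lambda>p. ?gap (sign_swap e p))"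
    by simp
  also have "(\<lambda>p. ?gap (sign_swap e p)) =
      (\<lambda>p. SUP h\<in>H. (1 / real s) * (\<Sum>j<s. e j * (f h (snd p j) - f h (fst p j))))"
    using rademacher_signs_values[OF assms] by (intro ext SUP_cong refl sample_mean_sign_swap_gap) auto
  finally show ?thesis .
qed

lemma signed_ghost_gap_le:
  "(SUP h\<in>H. (1 / real s) * (\<Sum>j<s. e j * (f h (X' j) - f h (X j))))
   \<le> rademacher_sup f H s X' e + rademacher_sup f H s X (\<lambda>j. - e j)"
proof (rule cSUP_least[OF H])
  fix h assume h: "h \<in> H"
  have "(1 / real s) * (\<Sum>j<s. e j * (f h (X' j) - f h (X j))) =
        (1 / real s) * (\<Sum>j<s. e j * f h (X' j)) + (1 / real s) * (\<Sum>j<s. (- e j) * f h (X j))"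
    by (simp add: sum_subtractf right_diff_distrib ring_distribs sum_negf)
  also have "\<dots> \<le> rademacher_sup f H s X' e + rademacher_sup f H s X (\<lambda>j. - e j)"
    unfolding rademacher_sup_def by (intro add_mono cSUP_upper[OF h] bdd_above_signed_mean)
  finally show "(1 / real s) * (\<Sum>j<s. e j * (f h (X' j) - f h (X j))) \<le> \<dots>" .
qed

lemma expectation_signed_ghost_gap_le:
  "measure_pmf.expectation (rademacher_signs s)
     (\<lambda>e. SUP h\<in>H. (1 / real s) * (\<Sum>j<s. e j * (f h (X' j) - f h (X j))))
   \<le> measure_pmf.expectation (rademacher_signs s) (rademacher_sup f H s X')
     + measure_pmf.expectation (rademacher_signs s) (rademacher_sup f H s X)"
proof -
  have "measure_pmf.expectation (rademacher_signs s)
          (\<lambda>e. SUP h\<in>H. (1 / real s) * (\<Sum>j<s. e j * (f h (X' j) - f h (X j))))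
        \<le> measure_pmf.expectation (rademacher_signs s)
          (\<lambda>e. rademacher_sup f H s X' e + rademacher_sup f H s X (\<lambda>j. - e j))"
    by (intro integral_mono integrable_measure_pmf_finite finite_set_pmf_rademacher_signs
        signed_ghost_gap_le)
  also have "\<dots> = measure_pmf.expectation (rademacher_signs s) (rademacher_sup f H s X')
     + measure_pmf.expectation (rademacher_signs s) (rademacher_sup f H s X)"
    using finite_set_pmf_rademacher_signs
    by (simp add: Bochner_Integration.integral_add integrable_measure_pmf_finite
        expectation_rademacher_sup_uminus)
  finally show ?thesis .
qed

lemma symmetrization:
  "measure_pmf.expectation (Pi_pmf {..<s} d (\<lambda>_. D))
     (\<lambda>X. SUP h\<in>H. measure_pmf.expectation D (f h) - sample_mean (f h) s X)
   \<le> 2 * measure_pmf.expectation (pair_pmf (Pi_pmf {..<s} d (\<lambda>_. D)) (rademacher_signs s))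
          (\<lambda>(w, e). rademacher_sup f H s w e)"
proof -
  define P where "P = Pi_pmf {..<s} d (\<lambda>_. D)"
  define E where "E = rademacher_signs s"
  define R where "R w = measure_pmf.expectation E (rademacher_sup f H s w)" for w
  have fin_P: "finite (set_pmf P)" using finite_set_pmf_sample by (simp add: P_def)
  have fin_E: "finite (set_pmf E)" unfolding E_def by (rule finite_set_pmf_rademacher_signs)
  have fin_PP: "finite (set_pmf (pair_pmf P P))" using fin_P by simp
  have int: "integrable (measure_pmf (pair_pmf P P)) g" for g :: "_ \<Rightarrow> real"
    using fin_PP by (rule integrable_measure_pmf_finite)
  have "measure_pmf.expectation P (\<lambda>X. SUP h\<in>H. measure_pmf.expectation D (f h) - sample_mean (f h) s X)
      \<le> measure_pmf.expectation (pair_pmf P P)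
          (\<lambda>p. SUP h\<in>H. sample_mean (f h) s (snd p) - sample_mean (f h) s (fst p))"
    unfolding P_def by (rule expectation_sup_gap_le_ghost)
  also have "\<dots> = measure_pmf.expectation E (\<lambda>e. measure_pmf.expectation (pair_pmf P P)
          (\<lambda>p. SUP h\<in>H. (1 / real s) * (\<Sum>j<s. e j * (f h (snd p j) - f h (fst p j)))))"
  proof -
    have "measure_pmf.expectation E (\<lambda>e. measure_pmf.expectation (pair_pmf P P)
          (\<lambda>p. SUP h\<in>H. (1 / real s) * (\<Sum>j<s. e j * (f h (snd p j) - f h (fst p j)))))
        = measure_pmf.expectation E (\<lambda>e. measure_pmf.expectation (pair_pmf P P)
          (\<lambda>p. SUP h\<in>H. sample_mean (f h) s (snd p) - sample_mean (f h) s (fst p)))"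
      unfolding P_def E_def
      by (intro integral_cong_AE) (auto simp: AE_measure_pmf_iff expectation_ghost_gap_sign_swap)
    then show ?thesis by simp
  qed
  also have "\<dots> = measure_pmf.expectation (pair_pmf P P) (\<lambda>p. measure_pmf.expectation E
          (\<lambda>e. SUP h\<in>H. (1 / real s) * (\<Sum>j<s. e j * (f h (snd p j) - f h (fst p j)))))"
    by (rule expectation_pmf_swap_finite[OF fin_E fin_PP])
  also have "\<dots> \<le> measure_pmf.expectation (pair_pmf P P) (\<lambda>p. R (snd p) + R (fst p))"
    unfolding R_def E_def
    by (intro integral_mono int expectation_signed_ghost_gap_le)
  also have "\<dots> = 2 * measure_pmf.expectation P R"
    using fin_PP by (simp add: Bochner_Integration.integral_add integrable_measure_pmf_finite)
  also have "\<dots> = 2 * measure_pmf.expectation (pair_pmf P E) (\<lambda>(w, e). rademacher_sup f H s w e)"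
    unfolding R_def using fin_P fin_E by (simp add: expectation_pair_pmf_finite)
  finally show ?thesis unfolding P_def E_def .
qed

end

subsection \<open>Rademacher complexity of a single point\<close>

lemma rademacher_return_pmf_one:
  "rademacher l H (return_pmf b) z 1 = ((SUP h\<in>H. - l h z b) + (SUP h\<in>H. l h z b)) / 2"
proof -
  have "{..<1::nat} = {0}" by auto
  then have "rademacher l H (return_pmf b) z 1 =
        measure_pmf.expectation (pmf_of_set {-1, 1::real}) (\<lambda>a. SUP h\<in>H. a * l h z b)"
    unfolding rademacher_def by (simp add: Pi_pmf_singleton pair_return_pmf1)
  also have "\<dots> = ((SUP h\<in>H. - l h z b) + (SUP h\<in>H. l h z b)) / 2"
    by (subst integral_pmf_of_set) auto
  finally show ?thesis .
qed

lemma loss_diff_le_rademacher_one: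
  assumes "h \<in> H" "h' \<in> H" "\<And>g a b. g \<in> H \<Longrightarrow> 0 \<le> l g a b \<and> l g a b \<le> Bd"
  shows "l h z b - l h' z b \<le> 2 * rademacher l H (return_pmf b) z 1"
proof -
  have "bdd_above ((\<lambda>g. l g z b) ` H)"
    using assms(3) by (intro bdd_aboveI2[where M=Bd]) auto
  then have "l h z b \<le> (SUP g\<in>H. l g z b)" by (rule cSUP_upper[OF assms(1)])
  moreover have "bdd_above ((\<lambda>g. - l g z b) ` H)"
    using assms(3) by (intro bdd_aboveI2[where M=0]) auto
  then have "- l h' z b \<le> (SUP g\<in>H. - l g z b)" by (rule cSUP_upper[OF assms(2)])
  ultimately show ?thesis unfolding rademacher_return_pmf_one by simp
qed

subsection \<open>The law of an RS-x buffer\<close>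

definition prefix_pmf :: "(nat \<Rightarrow> 'z) \<Rightarrow> nat \<Rightarrow> 'z pmf" where
  "prefix_pmf z m = map_pmf z (pmf_of_set {1..m})"

definition iid_buffer :: "nat \<Rightarrow> (nat \<Rightarrow> 'z) \<Rightarrow> nat \<Rightarrow> 'z list pmf" where
  "iid_buffer s z m = map_pmf (\<lambda>f. map f [0..<s]) (Pi_pmf {..<s} undefined (\<lambda>_. prefix_pmf z m))"

lemma finite_set_prefix_pmf: "m \<ge> 1 \<Longrightarrow> finite (set_pmf (prefix_pmf z m))"
  by (simp add: prefix_pmf_def)

lemma pmf_replace_with_prob_inverse:
  assumes "j \<noteq> k" "k \<ge> 1"
  shows "pmf (map_pmf (\<lambda>b. if b then k else j) (bernoulli_pmf (1 / real k))) i =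
         (if i = k then 1 / real k else 0) + (if i = j then 1 - 1 / real k else 0)"
proof -
  have "(\<lambda>b. if b then k else j) -` {i} =
        (if i = k then {True} else {}) \<union> (if i = j then {False} else {})"
    using assms(1) by (auto split: if_splits)
  then show ?thesis
    unfolding pmf_map using assms by (auto simp: measure_pmf_single)
qed

lemma uniform_replace_with_prob_inverse:
  assumes "k \<ge> 2"
  shows "bind_pmf (pmf_of_set {1..k-1})
           (\<lambda>j. map_pmf (\<lambda>b. if b then k else j) (bernoulli_pmf (1 / real k)))
         = pmf_of_set {1..k}"
proof (rule pmf_eqI)
  fix i
  have "pmf (bind_pmf (pmf_of_set {1..k-1})
               (\<lambda>j. map_pmf (\<lambda>b. if b then k else j) (bernoulli_pmf (1 / real k)))) i
      = (\<Sum>j\<in>{1..k-1}. pmf (map_pmf (\<lambda>b. if b then k else j) (bernoulli_pmf (1 / real k))) i)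
          / real (k - 1)"
    unfolding pmf_bind using assms by (subst integral_pmf_of_set) auto
  also have "\<dots> = (\<Sum>j\<in>{1..k-1}. (if i = k then 1 / real k else 0)
                     + (if i = j then 1 - 1 / real k else 0)) / real (k - 1)"
    using assms by (intro arg_cong2[where f="(/)"] sum.cong refl pmf_replace_with_prob_inverse) auto
  also have "\<dots> = (real (k - 1) * (if i = k then 1 / real k else 0)
                   + (if i \<in> {1..k-1} then 1 - 1 / real k else 0)) / real (k - 1)"
    by (simp add: sum.distrib)
  also have "\<dots> = pmf (pmf_of_set {1..k}) i"
    using assms by (auto simp: pmf_of_set of_nat_diff field_simps)
  finally show "pmf (bind_pmf (pmf_of_set {1..k-1})
      (\<lambda>j. map_pmf (\<lambda>b. if b then k else j) (bernoulli_pmf (1 / real k)))) i = pmf (pmf_of_set {1..k}) i" .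
qed

lemma prefix_pmf_replace_with_prob_inverse:
  assumes "k \<ge> 2"
  shows "bind_pmf (prefix_pmf z (k-1)) (\<lambda>a. map_pmf (\<lambda>b. if b then z k else a) (bernoulli_pmf (1 / real k)))
         = prefix_pmf z k"
proof -
  have "bind_pmf (prefix_pmf z (k-1)) (\<lambda>a. map_pmf (\<lambda>b. if b then z k else a) (bernoulli_pmf (1 / real k)))
      = map_pmf z (bind_pmf (pmf_of_set {1..k-1})
          (\<lambda>j. map_pmf (\<lambda>b. if b then k else j) (bernoulli_pmf (1 / real k))))"
    unfolding prefix_pmf_def bind_map_pmf map_bind_pmf map_pmf_comp
    by (intro bind_pmf_cong refl map_pmf_cong) auto
  then show ?thesis
    unfolding uniform_replace_with_prob_inverse[OF assms] prefix_pmf_def .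
qed

lemma map_pmf_rsx_traj_stable:
  "t \<le> k \<Longrightarrow> map_pmf (\<lambda>Bs. Bs t) (rsx_traj s z k) = map_pmf (\<lambda>Bs. Bs t) (rsx_traj s z t)"
proof (induction k)
  case (Suc k)
  show ?case
  proof (cases "t = Suc k")
    case False
    then have "t \<le> k" using Suc.prems by auto
    moreover have "map_pmf (\<lambda>Bs. Bs t) (rsx_traj s z (Suc k)) = map_pmf (\<lambda>Bs. Bs t) (rsx_traj s z k)"
    proof (cases "k = 0")
      case False
      then have "map_pmf (\<lambda>Bs. Bs t) (rsx_traj s z (Suc k)) =
                 bind_pmf (rsx_traj s z k) (\<lambda>Bs. return_pmf (Bs t))"
        using \<open>t \<noteq> Suc k\<close> by (simp add: map_bind_pmf map_pmf_comp)
      then show ?thesis by (simp add: map_pmf_def)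
    qed simp
    ultimately show ?thesis using Suc.IH by simp
  qed simp
qed simp

definition rsx_buffer :: "nat \<Rightarrow> (nat \<Rightarrow> 'z) \<Rightarrow> nat \<Rightarrow> 'z list pmf" where
  "rsx_buffer s z k = map_pmf (\<lambda>Bs. Bs k) (rsx_traj s z k)"

lemma rsx_buffer_Suc: "k \<ge> 1 \<Longrightarrow> rsx_buffer s z (Suc k) = bind_pmf (rsx_buffer s z k) (rsx_step s k (z k))"
  unfolding rsx_buffer_def by (simp add: map_bind_pmf map_pmf_comp bind_map_pmf)

lemma rsx_buffer_filling: "1 \<le> k \<Longrightarrow> k \<le> s + 1 \<Longrightarrow> rsx_buffer s z k = return_pmf (map z [1..<k])"
proof (induction k)
  case (Suc k)
  show ?case
  proof (cases "k = 0")
    case True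
    then show ?thesis by (simp add: rsx_buffer_def)
  next
    case False
    then have "rsx_buffer s z (Suc k) = rsx_step s k (z k) (map z [1..<k])"
      using Suc by (simp add: rsx_buffer_Suc bind_return_pmf)
    then show ?thesis
      using Suc.prems False by (simp add: rsx_step_def)
  qed
qed simp

lemma nth_prefix_snoc: "i < s + 1 \<Longrightarrow> (map z [1..<s+1] @ [z (s+1)]) ! i = z (Suc i)"
proof -
  assume i: "i < s + 1"
  have "map z [1..<s+1] @ [z (s+1)] = map z [1..<s+2]" by simp
  moreover have "i < length [1..<s+2]" using i by simp
  ultimately show ?thesis using i by (simp only: nth_map) (subst nth_upt; simp)
qed

lemma rsx_buffer_resample: "s \<ge> 1 \<Longrightarrow> rsx_buffer s z (s+2) = iid_buffer s z (s+1)"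
proof -
  assume "s \<ge> 1"
  have "map_pmf (\<lambda>i. (map z [1..<s+1] @ [z (s+1)]) ! i) (pmf_of_set {..<s+1}) =
        map_pmf z (map_pmf Suc (pmf_of_set {..<s+1}))"
    unfolding map_pmf_comp
    by (intro map_pmf_cong refl nth_prefix_snoc) (subst (asm) set_pmf_of_set; auto)
  also have "map_pmf Suc (pmf_of_set {..<s+1}) = pmf_of_set (Suc ` {..<s+1})"
    by (rule map_pmf_of_set_inj) auto
  also have "Suc ` {..<s+1} = {1..s+1}" by (rule image_Suc_lessThan)
  finally have draw: "map_pmf (\<lambda>i. (map z [1..<s+1] @ [z (s+1)]) ! i) (pmf_of_set {..<s+1}) =
                      prefix_pmf z (s+1)"
    unfolding prefix_pmf_def .
  have "rsx_buffer s z (Suc (s+1)) = rsx_step s (s+1) (z (s+1)) (map z [1..<s+1])"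
    using \<open>s \<ge> 1\<close> by (simp add: rsx_buffer_Suc rsx_buffer_filling bind_return_pmf)
  also have "\<dots> = map_pmf (\<lambda>f. map f [0..<s]) (Pi_pmf {..<s} undefined
      (\<lambda>_. map_pmf (\<lambda>i. (map z [1..<s+1] @ [z (s+1)]) ! i) (pmf_of_set {..<s+1})))"
    unfolding rsx_step_def by simp
  finally show ?thesis unfolding draw iid_buffer_def by simp
qed

lemma rsx_step_iid_buffer:
  assumes "k \<ge> s + 2"
  shows "bind_pmf (iid_buffer s z (k-1)) (rsx_step s k (z k)) = iid_buffer s z k"
proof -
  define replace where
    "replace a = map_pmf (\<lambda>b. if b then z k else a) (bernoulli_pmf (1 / real k))" for a
  have step: "rsx_step s k (z k) (map f [0..<s]) =
      map_pmf (\<lambda>g. map g [0..<s]) (Pi_pmf {..<s} undefined (\<lambda>i. replace (f i)))" for f :: "nat \<Rightarrow> 'a"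
  proof -
    have "Pi_pmf {..<s} undefined
            (\<lambda>i. map_pmf (\<lambda>b. if b then z k else map f [0..<s] ! i) (bernoulli_pmf (1 / real k)))
          = Pi_pmf {..<s} undefined (\<lambda>i. replace (f i))"
      unfolding replace_def by (intro Pi_pmf_cong refl map_pmf_cong) auto
    then show ?thesis using assms by (simp add: rsx_step_def)
  qed
  have "bind_pmf (iid_buffer s z (k-1)) (rsx_step s k (z k)) =
      map_pmf (\<lambda>g. map g [0..<s]) (bind_pmf (Pi_pmf {..<s} undefined (\<lambda>_. prefix_pmf z (k-1)))
        (\<lambda>f. Pi_pmf {..<s} undefined (\<lambda>i. replace (f i))))"
    unfolding iid_buffer_def bind_map_pmf step by (simp add: map_bind_pmf)
  also have "bind_pmf (Pi_pmf {..<s} undefined (\<lambda>_. prefix_pmf z (k-1)))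
        (\<lambda>f. Pi_pmf {..<s} undefined (\<lambda>i. replace (f i)))
      = Pi_pmf {..<s} undefined (\<lambda>_. bind_pmf (prefix_pmf z (k-1)) replace)"
    by (rule Pi_pmf_bind[symmetric]) auto
  also have "bind_pmf (prefix_pmf z (k-1)) replace = prefix_pmf z k"
    unfolding replace_def using assms by (intro prefix_pmf_replace_with_prob_inverse) auto
  finally show ?thesis by (simp add: iid_buffer_def)
qed

lemma rsx_buffer_iid: "s \<ge> 1 \<Longrightarrow> k \<ge> s + 2 \<Longrightarrow> rsx_buffer s z k = iid_buffer s z (k - 1)"
proof (induction k)
  case (Suc k)
  show ?case
  proof (cases "k = s + 1")
    case True
    then show ?thesis using rsx_buffer_resample[OF Suc.prems(1)] by simp
  next
    case False
    then have "k \<ge> s + 2" using Suc.prems by simp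
    then show ?thesis
      using Suc rsx_step_iid_buffer[of s k z] by (simp add: rsx_buffer_Suc)
  qed
qed simp

theorem rsx_traj_buffer_law:
  assumes "s \<ge> 1" "1 \<le> t" "t \<le> n"
  shows "map_pmf (\<lambda>Bs. Bs t) (rsx_traj s z n) =
         (if t \<le> s + 1 then return_pmf (map z [1..<t]) else iid_buffer s z (t - 1))"
  using map_pmf_rsx_traj_stable[OF assms(3), of s z] rsx_buffer_filling[of t s z] rsx_buffer_iid[of s t z] assms
  unfolding rsx_buffer_def by auto

subsection \<open>Reduction of the regret gap to penalty discrepancies\<close>

definition list_penalty :: "('h \<Rightarrow> 'z \<Rightarrow> 'z \<Rightarrow> real) \<Rightarrow> (nat \<Rightarrow> 'z) \<Rightarrow> nat \<Rightarrow> 'z list \<Rightarrow> 'h \<Rightarrow> real"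
  where "list_penalty l z t B h = (\<Sum>w\<leftarrow>B. l h (z t) w) / real (length B)"

definition discrepancy ::
  "('h \<Rightarrow> 'z \<Rightarrow> 'z \<Rightarrow> real) \<Rightarrow> (nat \<Rightarrow> 'z) \<Rightarrow> nat \<Rightarrow> 'h \<Rightarrow> 'z list \<Rightarrow> 'h \<Rightarrow> real"
  where "discrepancy l z t g B h =
    (pen_all l z t h - pen_all l z t g) - (list_penalty l z t B h - list_penalty l z t B g)"

definition sup_discrepancy ::
  "('h \<Rightarrow> 'z \<Rightarrow> 'z \<Rightarrow> real) \<Rightarrow> 'h set \<Rightarrow> (nat \<Rightarrow> 'z) \<Rightarrow> nat \<Rightarrow> 'h \<Rightarrow> 'z list \<Rightarrow> real"
  where "sup_discrepancy l H z t g B = (SUP h\<in>H. discrepancy l z t g B h)"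

lemma pen_buf_eq_list_penalty: "pen_buf l z Bs t h = list_penalty l z t (Bs t) h"
  by (simp add: pen_buf_def list_penalty_def)

lemma pen_all_eq_expectation_prefix_pmf:
  assumes "t \<ge> 2"
  shows "pen_all l z t h = measure_pmf.expectation (prefix_pmf z (t-1)) (l h (z t))"
proof -
  have "measure_pmf.expectation (prefix_pmf z (t-1)) (l h (z t)) =
        measure_pmf.expectation (pmf_of_set {1..t-1}) (\<lambda>\<tau>. l h (z t) (z \<tau>))"
    by (simp add: prefix_pmf_def)
  also have "\<dots> = (\<Sum>\<tau>=1..t-1. l h (z t) (z \<tau>)) / real (t - 1)"
    using assms by (subst integral_pmf_of_set) auto
  finally show ?thesis by (simp add: pen_all_def)
qed

lemma list_penalty_map_upt: "list_penalty l z t (map X [0..<s]) h = sample_mean (l h (z t)) s X"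
  unfolding list_penalty_def sample_mean_def
  by (simp add: interv_sum_list_conv_sum_set_nat atLeast0LessThan o_def)

lemma list_penalty_prefix: "t \<ge> 1 \<Longrightarrow> list_penalty l z t (map z [1..<t]) h = pen_all l z t h"
proof -
  assume "t \<ge> 1"
  then have "{1..<t} = {1..t-1}" by auto
  then show ?thesis unfolding list_penalty_def pen_all_def
    by (simp add: interv_sum_list_conv_sum_set_nat o_def)
qed

lemma sup_discrepancy_prefix:
  assumes "H \<noteq> {}" "t \<ge> 1"
  shows "sup_discrepancy l H z t g (map z [1..<t]) = 0"
  unfolding sup_discrepancy_def discrepancy_def list_penalty_prefix[OF assms(2)] using assms(1) by simp

lemma cSUP_diff_const:
  fixes f :: "'a \<Rightarrow> real"
  assumes "H \<noteq> {}" "bdd_above (f ` H)"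
  shows "(SUP h\<in>H. f h - c) = (SUP h\<in>H. f h) - c"
proof (rule antisym)
  show "(SUP h\<in>H. f h - c) \<le> (SUP h\<in>H. f h) - c"
    using assms by (intro cSUP_least) (auto intro: cSUP_upper)
  obtain M where "\<And>h. h \<in> H \<Longrightarrow> f h \<le> M" using assms(2) by (auto simp: bdd_above_def)
  then have "bdd_above ((\<lambda>h. f h - c) ` H)"
    by (intro bdd_aboveI2[where M="M - c"]) auto
  then have "(SUP h\<in>H. f h) \<le> (SUP h\<in>H. f h - c) + c"
    using assms(1) by (intro cSUP_least) (auto dest: cSUP_upper[where f="\<lambda>h. f h - c"])
  then show "(SUP h\<in>H. f h) - c \<le> (SUP h\<in>H. f h - c)" by simp
qed

lemma abs_cSUP_diff_le:
  fixes a b :: "'a \<Rightarrow> real"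
  assumes "H \<noteq> {}" "bdd_above (a ` H)" "bdd_above (b ` H)" "\<And>h. h \<in> H \<Longrightarrow> \<bar>a h - b h\<bar> \<le> c"
  shows "\<bar>(SUP h\<in>H. a h) - (SUP h\<in>H. b h)\<bar> \<le> c"
proof -
  have "(SUP h\<in>H. a h) \<le> (SUP h\<in>H. b h) + c"
  proof (rule cSUP_least[OF assms(1)])
    fix h assume h: "h \<in> H"
    have "b h \<le> (SUP h\<in>H. b h)" by (rule cSUP_upper[OF h assms(3)])
    then show "a h \<le> (SUP h\<in>H. b h) + c" using assms(4)[OF h] by linarith
  qed
  moreover have "(SUP h\<in>H. b h) \<le> (SUP h\<in>H. a h) + c"
  proof (rule cSUP_least[OF assms(1)])
    fix h assume h: "h \<in> H"
    have "a h \<le> (SUP h\<in>H. a h)" by (rule cSUP_upper[OF h assms(2)])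
    then show "b h \<le> (SUP h\<in>H. a h) + c" using assms(4)[OF h] by linarith
  qed
  ultimately show ?thesis by linarith
qed

context
  fixes l :: "'h \<Rightarrow> 'z \<Rightarrow> 'z \<Rightarrow> real" and H Bd
  assumes bounded: "\<And>h a b. h \<in> H \<Longrightarrow> 0 \<le> l h a b \<and> l h a b \<le> Bd"
begin

lemma pen_all_bounds: "h \<in> H \<Longrightarrow> t \<ge> 2 \<Longrightarrow> 0 \<le> pen_all l z t h \<and> pen_all l z t h \<le> Bd"
proof -
  assume h: "h \<in> H" and t: "t \<ge> 2"
  have "(\<Sum>\<tau>=1..t-1. l h (z t) (z \<tau>)) \<le> real (t - 1) * Bd"
    using bounded[OF h] sum_mono[of "{1..t-1}" "\<lambda>\<tau>. l h (z t) (z \<tau>)" "\<lambda>_. Bd"] by simp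
  moreover have "0 \<le> (\<Sum>\<tau>=1..t-1. l h (z t) (z \<tau>))"
    using bounded[OF h] by (intro sum_nonneg) auto
  moreover have "real (t - 1) > 0" using t by auto
  ultimately show ?thesis
    unfolding pen_all_def by (simp add: pos_divide_le_eq mult.commute)
qed

lemma list_penalty_bounds: "h \<in> H \<Longrightarrow> 0 \<le> list_penalty l z t B h \<and> list_penalty l z t B h \<le> Bd"
proof (cases "B = []")
  case True
  then show "h \<in> H \<Longrightarrow> ?thesis" using bounded[of h "z t" "z t"] by (simp add: list_penalty_def)
next
  case False
  assume h: "h \<in> H"
  have "(\<Sum>w\<leftarrow>B. l h (z t) w) \<le> real (length B) * Bd"
    using bounded[OF h] sum_list_mono[of B "l h (z t)" "\<lambda>_. Bd"] by (simp add: sum_list_triv)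
  moreover have "0 \<le> (\<Sum>w\<leftarrow>B. l h (z t) w)"
    using bounded[OF h] by (intro sum_list_nonneg) auto
  ultimately show ?thesis
    using False unfolding list_penalty_def by (simp add: pos_divide_le_eq mult.commute)
qed

lemma abs_discrepancy_le: "g \<in> H \<Longrightarrow> h \<in> H \<Longrightarrow> t \<ge> 2 \<Longrightarrow> \<bar>discrepancy l z t g B h\<bar> \<le> 2 * Bd"
  using pen_all_bounds[of h t z] pen_all_bounds[of g t z]
    list_penalty_bounds[of h z t B] list_penalty_bounds[of g z t B]
  unfolding discrepancy_def by (auto simp: abs_le_iff)

lemma bdd_above_discrepancy: "g \<in> H \<Longrightarrow> t \<ge> 2 \<Longrightarrow> bdd_above ((\<lambda>h. discrepancy l z t g B h) ` H)"
  by (rule bdd_aboveI2[where M="2 * Bd"]) (use abs_discrepancy_le in \<open>force simp: abs_le_iff\<close>)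

lemma regret_all_le_regret_buf_plus_sup_discrepancy:
  assumes "n \<ge> 2" and g: "g \<in> H"
    and opt: "(\<Sum>t=2..n. pen_all l z t g) = (INF g'\<in>H. \<Sum>t=2..n. pen_all l z t g')"
    and hs: "\<forall>t\<in>{1..n-1}. hs t \<in> H"
  shows "regret_all l H z n hs \<le> regret_buf l H z Bs n hs + (\<Sum>t=2..n. sup_discrepancy l H z t g (Bs t))"
proof -
  have "bdd_below ((\<lambda>g'. \<Sum>t=2..n. pen_buf l z Bs t g') ` H)"
    by (rule bdd_belowI2[where m=0])
      (auto intro!: sum_nonneg simp: pen_buf_eq_list_penalty list_penalty_bounds)
  then have inf: "(INF g'\<in>H. \<Sum>t=2..n. pen_buf l z Bs t g') \<le> (\<Sum>t=2..n. pen_buf l z Bs t g)"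
    by (rule cINF_lower[OF _ g])
  have "(\<Sum>t=2..n. pen_all l z t (hs (t - 1))) - (\<Sum>t=2..n. pen_all l z t g)
        - ((\<Sum>t=2..n. pen_buf l z Bs t (hs (t - 1))) - (\<Sum>t=2..n. pen_buf l z Bs t g))
      = (\<Sum>t=2..n. discrepancy l z t g (Bs t) (hs (t - 1)))"
    unfolding discrepancy_def pen_buf_eq_list_penalty by (simp add: sum_subtractf)
  also have "\<dots> \<le> (\<Sum>t=2..n. sup_discrepancy l H z t g (Bs t))"
  proof (intro sum_mono)
    fix t assume t: "t \<in> {2..n}"
    then have "t - 1 \<in> {1..n-1}" by auto
    then have "hs (t - 1) \<in> H" using hs by blast
    then show "discrepancy l z t g (Bs t) (hs (t - 1)) \<le> sup_discrepancy l H z t g (Bs t)"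
      unfolding sup_discrepancy_def using t by (intro cSUP_upper bdd_above_discrepancy g) auto
  qed
  finally show ?thesis using inf opt unfolding regret_all_def regret_buf_def by linarith
qed

end

subsection \<open>Concentration of the discrepancy of a sampled buffer\<close>

context
  fixes l :: "'h \<Rightarrow> 'z \<Rightarrow> 'z \<Rightarrow> real" and H :: "'h set" and Bd Cd c :: real
    and z :: "nat \<Rightarrow> 'z" and s t :: nat and g :: 'h
  assumes H: "H \<noteq> {}" and bounded: "\<And>h a b. h \<in> H \<Longrightarrow> 0 \<le> l h a b \<and> l h a b \<le> Bd"
    and g: "g \<in> H" and s: "s \<ge> 1" and t: "t \<ge> s + 2"
    and rademacher_le: "\<And>s' D w. s' \<ge> 1 \<Longrightarrow> rademacher l H D w s' \<le> Cd * c * sqrt (1 / real s')"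
begin

lemma finite_set_pmf_buffer_sample:
  "finite (set_pmf (Pi_pmf {..<s} undefined (\<lambda>_. prefix_pmf z (t-1))))"
  using t by (intro finite_set_pmf_Pi_pmf finite_set_prefix_pmf) auto

lemma abs_loss_diff_le:
  assumes h: "h \<in> H"
  shows "\<bar>l h (z t) w - l g (z t) w\<bar> \<le> 2 * (Cd * c)"
proof -
  have "l h (z t) w - l g (z t) w \<le> 2 * rademacher l H (return_pmf w) (z t) 1"
    by (rule loss_diff_le_rademacher_one[where l=l, OF h g bounded])
  moreover have "l g (z t) w - l h (z t) w \<le> 2 * rademacher l H (return_pmf w) (z t) 1"
    by (rule loss_diff_le_rademacher_one[where l=l, OF g h bounded])
  ultimately show ?thesis using rademacher_le[of 1 "return_pmf w" "z t"] by (simp add: abs_le_iff)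
qed

lemma sup_discrepancy_sample_eq:
  "sup_discrepancy l H z t g (map X [0..<s]) =
     (SUP h\<in>H. measure_pmf.expectation (prefix_pmf z (t-1)) (l h (z t)) - sample_mean (l h (z t)) s X)
     - (measure_pmf.expectation (prefix_pmf z (t-1)) (l g (z t)) - sample_mean (l g (z t)) s X)"
proof -
  have "bdd_above ((\<lambda>h. measure_pmf.expectation (prefix_pmf z (t-1)) (l h (z t))
                         - sample_mean (l h (z t)) s X) ` H)"
  proof (rule bdd_aboveI2[where M=Bd])
    fix h assume h: "h \<in> H"
    then show "measure_pmf.expectation (prefix_pmf z (t-1)) (l h (z t)) - sample_mean (l h (z t)) s X \<le> Bd"
      using pen_all_bounds[where l=l and H=H and Bd=Bd and t=t and z=z, OF bounded h]
        list_penalty_bounds[where l=l and H=H and Bd=Bd and z=z and t=t and B="map X [0..<s]", OF bounded h] t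
      by (simp add: pen_all_eq_expectation_prefix_pmf list_penalty_map_upt)
  qed
  moreover have "discrepancy l z t g (map X [0..<s]) h =
      (measure_pmf.expectation (prefix_pmf z (t-1)) (l h (z t)) - sample_mean (l h (z t)) s X)
      - (measure_pmf.expectation (prefix_pmf z (t-1)) (l g (z t)) - sample_mean (l g (z t)) s X)" for h
    unfolding discrepancy_def list_penalty_map_upt using t by (simp add: pen_all_eq_expectation_prefix_pmf)
  ultimately show ?thesis
    unfolding sup_discrepancy_def by (simp add: cSUP_diff_const[OF H])
qed

lemma expectation_sup_discrepancy_le:
  "measure_pmf.expectation (Pi_pmf {..<s} undefined (\<lambda>_. prefix_pmf z (t-1)))
     (\<lambda>X. sup_discrepancy l H z t g (map X [0..<s])) \<le> 2 * (Cd * c * sqrt (1 / real s))"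
proof -
  define P where "P = Pi_pmf {..<s} undefined (\<lambda>_. prefix_pmf z (t-1))"
  define E where "E h = measure_pmf.expectation (prefix_pmf z (t-1)) (l h (z t))" for h
  have fin_D: "finite (set_pmf (prefix_pmf z (t-1)))" using t by (intro finite_set_prefix_pmf) auto
  have abs_bounded: "\<And>h w. h \<in> H \<Longrightarrow> \<bar>l h (z t) w\<bar> \<le> Bd" using bounded by fastforce
  have int: "integrable (measure_pmf P) f" for f :: "_ \<Rightarrow> real"
    unfolding P_def by (rule integrable_measure_pmf_finite[OF finite_set_pmf_buffer_sample])
  have "measure_pmf.expectation P (\<lambda>X. sup_discrepancy l H z t g (map X [0..<s])) =
        measure_pmf.expectation P (\<lambda>X. SUP h\<in>H. E h - sample_mean (l h (z t)) s X)
        - (E g - measure_pmf.expectation P (sample_mean (l g (z t)) s))"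
    unfolding sup_discrepancy_sample_eq E_def using int
    by (simp add: Bochner_Integration.integral_diff)
  also have "measure_pmf.expectation P (sample_mean (l g (z t)) s) = E g"
    unfolding P_def E_def
    by (rule expectation_sample_mean[OF H fin_D s abs_bounded])
  also have "measure_pmf.expectation P (\<lambda>X. SUP h\<in>H. E h - sample_mean (l h (z t)) s X)
      \<le> 2 * rademacher l H (prefix_pmf z (t-1)) (z t) s"
    unfolding P_def E_def rademacher_eq_expectation_rademacher_sup
    by (rule symmetrization[OF H fin_D s abs_bounded])
  finally show ?thesis
    unfolding P_def using rademacher_le[OF s, of "prefix_pmf z (t-1)" "z t"] by linarith
qed

lemma sup_discrepancy_bounded_differences:
  assumes i: "i \<in> {..<s}" and XY: "\<And>j. j \<noteq> i \<Longrightarrow> X j = Y j"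
  shows "\<bar>sup_discrepancy l H z t g (map X [0..<s]) - sup_discrepancy l H z t g (map Y [0..<s])\<bar>
         \<le> 4 * (Cd * c) / real s"
  unfolding sup_discrepancy_def
proof (intro abs_cSUP_diff_le H bdd_above_discrepancy[where l=l and H=H and Bd=Bd, OF bounded g])
  fix h assume h: "h \<in> H"
  define r where "r w = l h (z t) w - l g (z t) w" for w
  have "discrepancy l z t g (map X [0..<s]) h - discrepancy l z t g (map Y [0..<s]) h
        = (\<Sum>j<s. r (Y j) - r (X j)) / real s"
    unfolding discrepancy_def list_penalty_map_upt sample_mean_def r_def
    by (simp add: sum_subtractf diff_divide_distrib)
  also have "(\<Sum>j<s. r (Y j) - r (X j)) = r (Y i) - r (X i)"
    using i XY by (subst sum.remove[of "{..<s}" i]) (auto intro: sum.neutral)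
  finally have "discrepancy l z t g (map X [0..<s]) h - discrepancy l z t g (map Y [0..<s]) h
             = (r (Y i) - r (X i)) / real s" .
  moreover have "\<bar>r (Y i) - r (X i)\<bar> \<le> 4 * (Cd * c)"
    using abs_loss_diff_le[OF h, of "Y i"] abs_loss_diff_le[OF h, of "X i"] unfolding r_def by linarith
  ultimately show "\<bar>discrepancy l z t g (map X [0..<s]) h - discrepancy l z t g (map Y [0..<s]) h\<bar>
                   \<le> 4 * (Cd * c) / real s"
    using s by (simp add: divide_right_mono)
qed (use t in auto)

lemma sup_discrepancy_tail:
  assumes Cd: "Cd > 0" and c: "c \<ge> 0" and L: "L > 0"
  shows "measure_pmf.prob (Pi_pmf {..<s} undefined (\<lambda>_. prefix_pmf z (t-1)))
           {X. 2 * (Cd * c * sqrt (1 / real s)) + Cd * (c + 1) * sqrt (32 * L / real s)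
               < sup_discrepancy l H z t g (map X [0..<s])}
         \<le> exp (- L)"
proof -
  define P where "P = Pi_pmf {..<s} undefined (\<lambda>_. prefix_pmf z (t-1))"
  define F where "F X = sup_discrepancy l H z t g (map X [0..<s])" for X
  define u where "u = Cd * (c + 1) * sqrt (32 * L / real s)"
  \<comment> \<open>\<open>c + 1\<close> rather than \<open>c\<close> keeps the bounded-differences constant positive when \<open>c = 0\<close>\<close>
  define \<kappa> where "\<kappa> = 4 * (Cd * (c + 1)) / real s"
  have u: "u > 0" and \<kappa>: "\<kappa> > 0" using Cd c L s by (simp_all add: u_def \<kappa>_def)
  define A where "A = (Cd * (c + 1))\<^sup>2"
  have A: "A > 0" using Cd c by (simp add: A_def)
  have "u\<^sup>2 = A * (32 * L / real s)"
    using L by (simp add: u_def A_def power_mult_distrib)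
  moreover have "\<kappa>\<^sup>2 = 16 * A / (real s)\<^sup>2"
    by (simp add: \<kappa>_def A_def power_mult_distrib power_divide)
  moreover have "A * (32 * L / real s) / (2 * real s * (16 * A / (real s)\<^sup>2)) = L"
    using A s by (simp add: field_simps power2_eq_square)
  ultimately have exponent: "u\<^sup>2 / (2 * real s * \<kappa>\<^sup>2) = L" by simp
  have "measure_pmf.prob P {X. 2 * (Cd * c * sqrt (1 / real s)) + u < F X}
        \<le> measure_pmf.prob P {X. F X - measure_pmf.expectation P F \<ge> u}"
    using expectation_sup_discrepancy_le unfolding P_def F_def
    by (intro measure_pmf.finite_measure_mono) auto
  also have "\<dots> \<le> exp (- (u\<^sup>2) / (2 * real (card {..<s}) * \<kappa>\<^sup>2))"
    unfolding P_def
  proof (rule mcdiarmid_inequality)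
    fix i and X Y :: "nat \<Rightarrow> 'z" assume "i \<in> {..<s}" "\<And>j. j \<noteq> i \<Longrightarrow> X j = Y j"
    then have "\<bar>F X - F Y\<bar> \<le> 4 * (Cd * c) / real s"
      unfolding F_def by (rule sup_discrepancy_bounded_differences)
    also have "\<dots> \<le> \<kappa>" unfolding \<kappa>_def using Cd s by (intro divide_right_mono) auto
    finally show "\<bar>F X - F Y\<bar> \<le> \<kappa>" .
  qed (use s t u \<kappa> in \<open>auto intro: finite_set_prefix_pmf simp: lessThan_empty_iff\<close>)
  finally show ?thesis
    using exponent unfolding P_def F_def u_def by simp
qed

end

lemma sup_discrepancy_degenerate:
  assumes H: "H \<noteq> {}" and bounded: "\<And>h a b. h \<in> H \<Longrightarrow> 0 \<le> l h a b \<and> l h a b \<le> Bd"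
    and g: "g \<in> H" and rademacher_le: "\<And>b w. rademacher l H (return_pmf b) w 1 \<le> 0"
  shows "sup_discrepancy l H z t g B = 0"
proof -
  have pointwise: "l h a b = l g a b" if h: "h \<in> H" for h a b
  proof (rule antisym)
    show "l h a b \<le> l g a b"
      using loss_diff_le_rademacher_one[where l=l and z=a and b=b, OF h g bounded] rademacher_le[of b a] by simp
    show "l g a b \<le> l h a b"
      using loss_diff_le_rademacher_one[where l=l and z=a and b=b, OF g h bounded] rademacher_le[of b a] by simp
  qed
  have "l h = l g" if "h \<in> H" for h
    by (intro ext pointwise[OF that])
  then have "discrepancy l z t g B h = 0" if "h \<in> H" for h
    using that unfolding discrepancy_def pen_all_def list_penalty_def by simp
  then show ?thesis unfolding sup_discrepancy_def using H by simp
qed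

lemma discrepancy_threshold_le:
  assumes Cd: "Cd \<ge> 0" and c: "c \<ge> 0" and s: "s \<ge> (1::nat)" and L: "L \<ge> 1/4"
  shows "2 * (Cd * c * sqrt (1 / real s)) + Cd * (c + 1) * sqrt (32 * L / real s)
         \<le> Cd * (10 * (c + 1)) * sqrt (L / real s)"
proof -
  define q where "q = sqrt (L / real s)"
  have q: "q \<ge> 0" using L s by (simp add: q_def)
  have "sqrt (1 / real s) \<le> sqrt (4 * (L / real s))"
    using L s by (intro real_sqrt_le_mono) (simp add: divide_right_mono)
  also have "\<dots> = sqrt 4 * q" unfolding q_def by (rule real_sqrt_mult)
  also have "sqrt (4::real) = 2" by (rule real_sqrt_unique) auto
  finally have one: "sqrt (1 / real s) \<le> 2 * q" .
  have "sqrt (32 * L / real s) = sqrt 32 * q" by (simp add: q_def real_sqrt_mult[symmetric])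
  also have "sqrt (32::real) \<le> 6" by (rule real_le_lsqrt) auto
  then have "sqrt 32 * q \<le> 6 * q" using q by (intro mult_right_mono) auto
  finally have thirty_two: "sqrt (32 * L / real s) \<le> 6 * q" .
  have "2 * (Cd * c * sqrt (1 / real s)) + Cd * (c + 1) * sqrt (32 * L / real s)
        \<le> 2 * (Cd * c * (2 * q)) + Cd * (c + 1) * (6 * q)"
    using one thirty_two Cd c by (intro add_mono mult_left_mono) auto
  also have "\<dots> \<le> Cd * (10 * (c + 1)) * q"
    using Cd c q by (simp add: algebra_simps mult_nonneg_nonneg)
  finally show ?thesis unfolding q_def .
qed

lemma rsx_sup_discrepancy_tail:
  assumes H: "H \<noteq> {}" and bounded: "\<And>h a b. h \<in> H \<Longrightarrow> 0 \<le> l h a b \<and> l h a b \<le> Bd"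
    and g: "g \<in> H" and s: "s \<ge> 1" and t: "t \<in> {2..n}"
    and rademacher_le: "\<And>s' D w. s' \<ge> 1 \<Longrightarrow> rademacher l H D w s' \<le> Cd * c * sqrt (1 / real s')"
    and Cd: "Cd > 0" and c: "c \<ge> 0" and L: "L > 0"
  shows "measure_pmf.prob (rsx_traj s z n)
           {Bs. 2 * (Cd * c * sqrt (1 / real s)) + Cd * (c + 1) * sqrt (32 * L / real s)
                < sup_discrepancy l H z t g (Bs t)}
         \<le> exp (- L)"
proof -
  define \<epsilon> where "\<epsilon> = 2 * (Cd * c * sqrt (1 / real s)) + Cd * (c + 1) * sqrt (32 * L / real s)"
  have "measure_pmf.prob (rsx_traj s z n) {Bs. \<epsilon> < sup_discrepancy l H z t g (Bs t)}
      = measure_pmf.prob (map_pmf (\<lambda>Bs. Bs t) (rsx_traj s z n)) {B. \<epsilon> < sup_discrepancy l H z t g B}"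
    by (simp add: measure_map_pmf vimage_def)
  also have "\<dots> \<le> exp (- L)"
  proof (cases "t \<le> s + 1")
    case True
    have "\<epsilon> > 0" unfolding \<epsilon>_def using Cd c L s by (intro add_nonneg_pos) auto
    then show ?thesis
      using rsx_traj_buffer_law[OF s, of t n z] sup_discrepancy_prefix[OF H, of t l z g] True t by auto
  next
    case False
    then have "measure_pmf.prob (map_pmf (\<lambda>Bs. Bs t) (rsx_traj s z n)) {B. \<epsilon> < sup_discrepancy l H z t g B}
        = measure_pmf.prob (Pi_pmf {..<s} undefined (\<lambda>_. prefix_pmf z (t-1)))
            {X. \<epsilon> < sup_discrepancy l H z t g (map X [0..<s])}"
      using rsx_traj_buffer_law[OF s, of t n z] t by (simp add: iid_buffer_def measure_map_pmf vimage_def)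
    also have "\<dots> \<le> exp (- L)"
      unfolding \<epsilon>_def using False
      by (intro sup_discrepancy_tail[OF H bounded g s _ rademacher_le Cd c L]) auto
    finally show ?thesis .
  qed
  finally show ?thesis unfolding \<epsilon>_def .
qed

lemma rsx_all_sup_discrepancy_le:
  assumes H: "H \<noteq> {}" and bounded: "\<And>h a b. h \<in> H \<Longrightarrow> 0 \<le> l h a b \<and> l h a b \<le> Bd"
    and Cd: "Cd \<ge> 0" and c: "c \<ge> 0"
    and rademacher_le: "\<And>s' D w. s' \<ge> 1 \<Longrightarrow> rademacher l H D w s' \<le> Cd * c * sqrt (1 / real s')"
    and g: "g \<in> H" and n: "n \<ge> 2" and s: "s \<ge> 1" and \<delta>: "0 < \<delta>" "\<delta> < 1"
  shows "measure_pmf.prob (rsx_traj s z n)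
           {Bs. \<forall>t\<in>{2..n}. sup_discrepancy l H z t g (Bs t) \<le>
                 2 * (Cd * c * sqrt (1 / real s)) + Cd * (c + 1) * sqrt (32 * ln (real n / \<delta>) / real s)}
         \<ge> 1 - real (n - 1) * (\<delta> / real n)"
    (is "measure_pmf.prob _ {Bs. \<forall>t\<in>{2..n}. sup_discrepancy l H z t g (Bs t) \<le> ?\<epsilon>} \<ge> _")
proof (cases "Cd = 0")
  case True
  have "rademacher l H (return_pmf b) w 1 \<le> 0" for b w
    using True rademacher_le[of 1 "return_pmf b" w] by simp
  note sup_discrepancy_zero = sup_discrepancy_degenerate[OF H bounded g this]
  show ?thesis using True c n \<delta> by (simp add: sup_discrepancy_zero)
next
  case False
  define L where "L = ln (real n / \<delta>)"
  have "L > 0" unfolding L_def using n \<delta> by simp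
  have "exp (- L) = \<delta> / real n" unfolding L_def using n \<delta> by (simp add: exp_minus)
  then have "measure_pmf.prob (rsx_traj s z n) {Bs. \<not> sup_discrepancy l H z t g (Bs t) \<le> ?\<epsilon>}
             \<le> \<delta> / real n" if "t \<in> {2..n}" for t
    using rsx_sup_discrepancy_tail[where l=l and H=H and Bd=Bd and L=L and z=z and n=n,
        OF H bounded g s that rademacher_le _ c \<open>L > 0\<close>] False Cd
    unfolding L_def by (simp add: not_le)
  then have "measure_pmf.prob (rsx_traj s z n) {Bs. \<forall>t\<in>{2..n}. sup_discrepancy l H z t g (Bs t) \<le> ?\<epsilon>}
             \<ge> 1 - real (card {2..n}) * (\<delta> / real n)"
    by (intro prob_all_ge_union_bound) auto
  then show ?thesis by simp
qed

lemma rsx_regret_bound: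
  assumes H: "H \<noteq> {}" and bounded: "\<And>h a b. h \<in> H \<Longrightarrow> 0 \<le> l h a b \<and> l h a b \<le> Bd"
    and Cd: "Cd \<ge> 0" and c: "c \<ge> 0"
    and rademacher_le: "\<And>s' D w. s' \<ge> 1 \<Longrightarrow> rademacher l H D w s' \<le> Cd * c * sqrt (1 / real s')"
    and g: "g \<in> H" and opt: "(\<Sum>t=2..n. pen_all l z t g) = (INF g'\<in>H. \<Sum>t=2..n. pen_all l z t g')"
    and hs: "\<And>Bs. \<forall>t\<in>{1..n-1}. hs Bs t \<in> H"
    and n: "n \<ge> 2" and s: "s \<ge> 1" and \<delta>: "0 < \<delta>" "\<delta> < 1"
  shows "measure_pmf.prob (rsx_traj s z n)
           {Bs. regret_all l H z n (hs Bs) \<le> regret_buf l H z Bs n (hs Bs)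
                + Cd * real (n - 1) * (10 * (c + 1)) * sqrt (ln (real n / \<delta>) / real s)}
         \<ge> 1 - \<delta>"
    (is "measure_pmf.prob _ ?good \<ge> _")
proof -
  define L where "L = ln (real n / \<delta>)"
  define \<epsilon> where "\<epsilon> = 2 * (Cd * c * sqrt (1 / real s)) + Cd * (c + 1) * sqrt (32 * L / real s)"
  have "ln 2 \<le> L"
    unfolding L_def using n \<delta> by (subst ln_le_cancel_iff) (auto simp: le_divide_eq)
  then have L: "L \<ge> 2 / 3" using ln2_ge_two_thirds by linarith
  have "{Bs. \<forall>t\<in>{2..n}. sup_discrepancy l H z t g (Bs t) \<le> \<epsilon>} \<subseteq> ?good"
  proof
    fix Bs assume "Bs \<in> {Bs. \<forall>t\<in>{2..n}. sup_discrepancy l H z t g (Bs t) \<le> \<epsilon>}"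
    then have "(\<Sum>t=2..n. sup_discrepancy l H z t g (Bs t)) \<le> real (n - 1) * \<epsilon>"
      using sum_mono[of "{2..n}" "\<lambda>t. sup_discrepancy l H z t g (Bs t)" "\<lambda>_. \<epsilon>"] n by simp
    also have "\<dots> \<le> real (n - 1) * (Cd * (10 * (c + 1)) * sqrt (L / real s))"
      unfolding \<epsilon>_def using discrepancy_threshold_le[OF Cd c s, of L] L by (intro mult_left_mono) auto
    finally show "Bs \<in> ?good"
      using regret_all_le_regret_buf_plus_sup_discrepancy[OF bounded n g opt hs[of Bs], where Bs=Bs]
      unfolding L_def by (simp add: algebra_simps)
  qed
  then have "measure_pmf.prob (rsx_traj s z n) {Bs. \<forall>t\<in>{2..n}. sup_discrepancy l H z t g (Bs t) \<le> \<epsilon>}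
             \<le> measure_pmf.prob (rsx_traj s z n) ?good"
    by (intro measure_pmf.finite_measure_mono) auto
  moreover have "real (n - 1) * (\<delta> / real n) \<le> \<delta>"
    using n \<delta> by (simp add: field_simps)
  ultimately show ?thesis
    using rsx_all_sup_discrepancy_le[OF H bounded Cd c rademacher_le g n s \<delta>, of z]
    unfolding \<epsilon>_def L_def by linarith
qed

theorem lemma22:
  fixes Bd c :: real
  assumes "Bd \<ge> 0" and "c \<ge> 0"
  shows "\<exists>K::real. \<forall>(l :: 'h \<Rightarrow> 'z \<Rightarrow> 'z \<Rightarrow> real) (H :: 'h set) (Cd :: real)
            (z :: nat \<Rightarrow> 'z) (n :: nat) (s :: nat) (\<delta> :: real)
            (hs :: (nat \<Rightarrow> 'z list) \<Rightarrow> nat \<Rightarrow> 'h).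
      H \<noteq> {} \<and>
      (\<forall>h\<in>H. \<forall>a b. 0 \<le> l h a b \<and> l h a b \<le> Bd) \<and>
      Cd \<ge> 0 \<and>
      (\<forall>s'\<ge>1. \<forall>D w. rademacher l H D w s' \<le> Cd * c * sqrt (1 / real s')) \<and>
      (\<exists>g\<in>H. (\<Sum>t=2..n. pen_all l z t g) = (INF g'\<in>H. \<Sum>t=2..n. pen_all l z t g')) \<and>
      (\<forall>Bs. \<forall>t\<in>{1..n-1}. hs Bs t \<in> H) \<and>
      n \<ge> 2 \<and> s \<ge> 1 \<and> 0 < \<delta> \<and> \<delta> < 1
      \<longrightarrow>
      measure_pmf.prob (rsx_traj s z n)
        {Bs. regret_all l H z n (hs Bs)
             \<le> regret_buf l H z Bs n (hs Bs)
                + Cd * real (n - 1) * K * sqrt (ln (real n / \<delta>) / real s)}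
      \<ge> 1 - \<delta>"
  by (intro exI[of _ "10 * (c + 1)"] allI impI, elim conjE bexE, rule rsx_regret_bound)
    (use assms in auto)

end
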